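(* Let $f\colon X\to Y$ be a large scale uniform function between metric spaces. Then $$\operatorname{asdim}(X)\leq \operatorname{asdim}(f)+\operatorname{asdim}(Y).$$
   Context: For a metric space $X$ and $n\ge 0$: $\operatorname{asdim}(X)\le n$ means that for every $r>0$ there are $D<\infty$ and families $\mathcal U_1,\dots,\mathcal U_{n+1}$ of subsets of $X$ such that $\bigcup_i\mathcal U_i$ covers $X$, each $\mathcal U_i$ is $r$-disjoint (i.e. $d(a,b)\ge r$ whenever $a,b$ lie in different members of $\mathcal U_i$), and every member of every $\mathcal U_i$ has diameter at most $D$. $\operatorname{asdim}(X)$ is the least such $n$ ($\infty$ if none exists). A function $f\colon X\to Y$ is large scale uniform if there is $c_f\colon\mathbb R_+\to\mathbb R_+$ with $d_X(x,y)\le r\Rightarrow d_Y(f(x),f(y))\le c_f(r)$. The asymptotic dimension of a function $f\colon X\to Y$ is $\operatorname{asdim}(f)=\sup\{\operatorname{asdim}(A): A\subset X,\ \operatorname{asdim}(f(A))=0\}$ (with the metrics restricted from $X$ and $Y$). *)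

theory Defs
  imports "HOL-Analysis.Analysis" "HOL-Library.Extended_Nat"
begin

text \<open>Metric spaces are modelled as subsets of a type of class metric_space,
  with the restricted metric.  asdim_le S n: for every r > 0 there are a bound D
  and n+1 families U 0, ..., U n of subsets of S covering S, each r-disjoint,
  all members of diameter at most D.\<close>

definition asdim_le :: "'a::metric_space set \<Rightarrow> nat \<Rightarrow> bool" where
  "asdim_le S n \<longleftrightarrow>
    (\<forall>r>0. \<exists>D::real. \<exists>U :: nat \<Rightarrow> 'a set set.
       (\<forall>i\<le>n. \<forall>A\<in>U i. A \<subseteq> S) \<and>
       (\<Union>i\<le>n. \<Union>(U i)) = S \<and>
       (\<forall>i\<le>n. \<forall>A\<in>U i. \<forall>B\<in>U i. A \<noteq> B \<longrightarrow> (\<forall>a\<in>A. \<forall>b\<in>B. dist a b \<ge> r)) \<and>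
       (\<forall>i\<le>n. \<forall>A\<in>U i. \<forall>a\<in>A. \<forall>b\<in>A. dist a b \<le> D))"

definition asdim :: "'a::metric_space set \<Rightarrow> enat" where
  "asdim S = (if \<exists>n. asdim_le S n then enat (LEAST n. asdim_le S n) else \<infinity>)"

definition large_scale_uniform :: "'a::metric_space set \<Rightarrow> ('a \<Rightarrow> 'b::metric_space) \<Rightarrow> bool" where
  "large_scale_uniform X f \<longleftrightarrow>
    (\<exists>c::real \<Rightarrow> real. \<forall>r\<ge>0. \<forall>x\<in>X. \<forall>y\<in>X. dist x y \<le> r \<longrightarrow> dist (f x) (f y) \<le> c r)"

definition asdim_fun :: "'a::metric_space set \<Rightarrow> ('a \<Rightarrow> 'b::metric_space) \<Rightarrow> enat" where
  "asdim_fun X f = Sup {asdim A | A. A \<subseteq> X \<and> asdim (f ` A) = 0}"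

end

theory Submission
  imports Defs
begin

text \<open>Fix \<open>r > 0\<close> and let \<open>R\<close> bound the distance of the images of \<open>r\<close>-close points. By the
  Kolmogorov trick, \<open>asdim Y \<le> m\<close> yields \<open>n + m + 1\<close> families \<open>W\<^sub>l\<close> of \<open>R\<close>-disjoint bounded sets
  such that every point of \<open>Y\<close> lies in at least \<open>n + 1\<close> of them; take also a coarse \<open>(m+1)\<close>-coloured
  cover \<open>V\<^sub>a\<close> of \<open>Y\<close> whose pieces are further apart than the diameter of the sets in the \<open>W\<^sub>l\<close>.
  Since \<open>asdim f \<le> n\<close>, the preimages of the pieces of \<open>V\<^sub>a\<close> are uniformly of dimension \<open>n\<close>
  (otherwise bad pieces could be chosen ever further apart, and their union would have dimension \<open>0\<close>),
  so they too carry \<open>n + m + 1\<close> families, every point lying in at least \<open>m + 1\<close> of them. Over a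
  set \<open>W \<in> W\<^sub>l\<close> the level-\<open>l\<close> pieces coming from the \<open>m + 1\<close> colours are merged into one
  \<open>r\<close>-disjoint bounded family by saturating colour after colour at increasing scales; different sets
  of \<open>W\<^sub>l\<close> are \<open>R\<close>-apart, hence their preimages \<open>r\<close>-apart. Counting shows that every point of \<open>X\<close>
  is covered at some common level, so the \<open>n + m + 1\<close> levels colour \<open>X\<close>.\<close>

section \<open>Separated covers\<close>

definition r_disjoint :: "real \<Rightarrow> 'a::metric_space set set \<Rightarrow> bool" where
  "r_disjoint r F \<longleftrightarrow> (\<forall>A\<in>F. \<forall>B\<in>F. A \<noteq> B \<longrightarrow> (\<forall>a\<in>A. \<forall>b\<in>B. r \<le> dist a b))"

definition diam_le :: "real \<Rightarrow> 'a::metric_space set \<Rightarrow> bool" where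
  "diam_le D A \<longleftrightarrow> (\<forall>a\<in>A. \<forall>b\<in>A. dist a b \<le> D)"

definition disjoint_cover :: "'a::metric_space set \<Rightarrow> real \<Rightarrow> real \<Rightarrow> bool" where
  "disjoint_cover S r D \<longleftrightarrow> (\<exists>F. \<Union>F = S \<and> r_disjoint r F \<and> (\<forall>A\<in>F. diam_le D A))"

definition asdim_cover :: "'a::metric_space set \<Rightarrow> nat \<Rightarrow> real \<Rightarrow> real \<Rightarrow> bool" where
  "asdim_cover S n r D \<longleftrightarrow>
     (\<exists>U. (\<Union>i\<le>n. \<Union>(U i)) = S \<and> (\<forall>i\<le>n. r_disjoint r (U i) \<and> (\<forall>A\<in>U i. diam_le D A)))"

lemma r_disjointD: "r_disjoint r F \<Longrightarrow> A \<in> F \<Longrightarrow> B \<in> F \<Longrightarrow> a \<in> A \<Longrightarrow> b \<in> B \<Longrightarrow> dist a b < r \<Longrightarrow> A = B"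
  unfolding r_disjoint_def by force

lemma diam_leD: "diam_le D A \<Longrightarrow> a \<in> A \<Longrightarrow> b \<in> A \<Longrightarrow> dist a b \<le> D"
  unfolding diam_le_def by blast

lemma diam_le_subset: "diam_le D A \<Longrightarrow> B \<subseteq> A \<Longrightarrow> diam_le D B"
  unfolding diam_le_def by blast

lemma diam_le_mono: "diam_le D A \<Longrightarrow> D \<le> D' \<Longrightarrow> diam_le D' A"
  unfolding diam_le_def by force

lemma bounded_iff_diam_le: "bounded A \<longleftrightarrow> (\<exists>D. diam_le D A)"
  unfolding diam_le_def by (rule bounded_two_points)

lemma asdim_le_iff_asdim_cover: "asdim_le S n \<longleftrightarrow> (\<forall>r>0. \<exists>D. asdim_cover S n r D)"
proof -
  have sub: "(\<Union>i\<le>n. \<Union>(U i)) = S \<Longrightarrow> \<forall>i\<le>n. \<forall>A\<in>U i. A \<subseteq> S" for U :: "nat \<Rightarrow> 'a set set"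
    by auto
  have "asdim_cover S n r D \<longleftrightarrow> (\<exists>U. (\<forall>i\<le>n. \<forall>A\<in>U i. A \<subseteq> S) \<and> (\<Union>i\<le>n. \<Union>(U i)) = S \<and>
     (\<forall>i\<le>n. r_disjoint r (U i)) \<and> (\<forall>i\<le>n. \<forall>A\<in>U i. diam_le D A))" for r D
    unfolding asdim_cover_def using sub by (auto intro!: ex_cong1)
  then show ?thesis
    by (simp only: asdim_le_def r_disjoint_def diam_le_def)
qed

lemma asdim_cover_0_iff: "asdim_cover S 0 r D \<longleftrightarrow> disjoint_cover S r D"
proof
  assume "asdim_cover S 0 r D"
  then obtain U where "\<Union>(U 0) = S" "r_disjoint r (U 0)" "\<forall>A\<in>U 0. diam_le D A"
    unfolding asdim_cover_def by auto
  then show "disjoint_cover S r D"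
    unfolding disjoint_cover_def by blast
next
  assume "disjoint_cover S r D"
  then obtain F where "\<Union>F = S" "r_disjoint r F" "\<forall>A\<in>F. diam_le D A"
    unfolding disjoint_cover_def by blast
  then show "asdim_cover S 0 r D"
    unfolding asdim_cover_def by (intro exI[of _ "\<lambda>_. F"]) simp
qed

lemma asdim_cover_if_disjoint_covers:
  assumes "(\<Union>i\<le>n. T i) = S" "\<And>i. i \<le> n \<Longrightarrow> disjoint_cover (T i) r D"
  shows "asdim_cover S n r D"
proof -
  have "\<forall>i\<in>{..n}. \<exists>F. \<Union>F = T i \<and> r_disjoint r F \<and> (\<forall>A\<in>F. diam_le D A)"
    using assms(2) unfolding disjoint_cover_def by blast
  then obtain U where U: "\<forall>i\<in>{..n}. \<Union>(U i) = T i \<and> r_disjoint r (U i) \<and> (\<forall>A\<in>U i. diam_le D A)"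
    by (rule bchoice[THEN exE])
  then have "(\<Union>i\<le>n. \<Union>(U i)) = S"
    using assms(1) by simp
  then show ?thesis
    unfolding asdim_cover_def using U by (intro exI[of _ U]) simp
qed

lemma asdim_cover_mono:
  assumes "asdim_cover S n r D" "D \<le> D'"
  shows "asdim_cover S n r D'"
proof -
  obtain U where "(\<Union>i\<le>n. \<Union>(U i)) = S" "\<forall>i\<le>n. r_disjoint r (U i) \<and> (\<forall>A\<in>U i. diam_le D A)"
    using assms(1) unfolding asdim_cover_def by blast
  then show ?thesis
    unfolding asdim_cover_def using diam_le_mono[OF _ assms(2)] by blast
qed

lemma asdim_cover_subset:
  assumes "asdim_cover S n r D" "T \<subseteq> S"
  shows "asdim_cover T n r D"
proof -
  obtain U where U: "(\<Union>i\<le>n. \<Union>(U i)) = S" "\<And>i. i \<le> n \<Longrightarrow> r_disjoint r (U i)"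
    "\<And>i A. i \<le> n \<Longrightarrow> A \<in> U i \<Longrightarrow> diam_le D A"
    using assms(1) unfolding asdim_cover_def by blast
  define U' where "U' i = (\<lambda>A. A \<inter> T) ` U i" for i
  have "(\<Union>i\<le>n. \<Union>(U' i)) = T"
    using U(1) assms(2) unfolding U'_def by blast
  moreover have "r_disjoint r (U' i)" if "i \<le> n" for i
    using U(2)[OF that] unfolding U'_def r_disjoint_def by blast
  moreover have "diam_le D A" if "i \<le> n" "A \<in> U' i" for i A
    using that U(3) diam_le_subset unfolding U'_def by blast
  ultimately show ?thesis
    unfolding asdim_cover_def by blast
qed

lemma asdim_le_subset: "asdim_le S n \<Longrightarrow> T \<subseteq> S \<Longrightarrow> asdim_le T n"
  unfolding asdim_le_iff_asdim_cover using asdim_cover_subset by blast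

lemma asdim_cover_mono_dim:
  assumes "asdim_cover S n r D" "n \<le> n'"
  shows "asdim_cover S n' r D"
proof -
  obtain U where U: "(\<Union>i\<le>n. \<Union>(U i)) = S" "\<And>i. i \<le> n \<Longrightarrow> r_disjoint r (U i)"
    "\<And>i A. i \<le> n \<Longrightarrow> A \<in> U i \<Longrightarrow> diam_le D A"
    using assms(1) unfolding asdim_cover_def by blast
  define U' where "U' i = (if i \<le> n then U i else {})" for i
  have "(\<Union>i\<le>n'. \<Union>(U' i)) = S"
    using U(1) assms(2) unfolding U'_def by (fastforce split: if_splits)
  moreover have "\<forall>i\<le>n'. r_disjoint r (U' i) \<and> (\<forall>A\<in>U' i. diam_le D A)"
    using U(2,3) unfolding U'_def r_disjoint_def by auto
  ultimately show ?thesis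
    unfolding asdim_cover_def by (intro exI[of _ U'] conjI)
qed

lemma asdim_le_mono: "asdim_le S n \<Longrightarrow> n \<le> n' \<Longrightarrow> asdim_le S n'"
  unfolding asdim_le_iff_asdim_cover using asdim_cover_mono_dim by blast

lemma asdim_le_enat_iff: "asdim S \<le> enat n \<longleftrightarrow> asdim_le S n"
proof
  assume "asdim S \<le> enat n"
  then have ex: "\<exists>n. asdim_le S n" and "(LEAST n. asdim_le S n) \<le> n"
    unfolding asdim_def by (auto split: if_splits)
  then show "asdim_le S n"
    using LeastI_ex asdim_le_mono by blast
next
  assume "asdim_le S n"
  then show "asdim S \<le> enat n"
    unfolding asdim_def by (auto intro: Least_le)
qed

lemma asdim_le_0_if_bounded:
  assumes "bounded S"
  shows "asdim_le S 0"
proof -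
  obtain D where "diam_le D S"
    using assms bounded_iff_diam_le by blast
  then have "disjoint_cover S r D" for r
    unfolding disjoint_cover_def r_disjoint_def by (intro exI[of _ "{S}"]) simp
  then show ?thesis
    unfolding asdim_le_iff_asdim_cover asdim_cover_0_iff by blast
qed

lemma asdim_le_of_asdim_fun:
  assumes "asdim_fun X f \<le> enat n" "A \<subseteq> X" "asdim_le (f ` A) 0"
  shows "asdim_le A n"
proof -
  have "asdim (f ` A) = 0"
    using asdim_le_enat_iff[of "f ` A" 0] assms(3) by (simp add: zero_enat_def[symmetric])
  then have "asdim A \<le> asdim_fun X f"
    unfolding asdim_fun_def using assms(2) by (blast intro: Sup_upper)
  then show ?thesis
    using assms(1) asdim_le_enat_iff by (metis order_trans)
qed

lemma disjoint_cover_empty: "disjoint_cover {} r D"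
  unfolding disjoint_cover_def r_disjoint_def by (intro exI[of _ "{}"]) simp

lemma disjoint_cover_Union:
  assumes "r_disjoint r SS" "\<And>S. S \<in> SS \<Longrightarrow> disjoint_cover S r D"
  shows "disjoint_cover (\<Union>SS) r D"
proof -
  have "\<forall>S\<in>SS. \<exists>F. \<Union>F = S \<and> r_disjoint r F \<and> (\<forall>A\<in>F. diam_le D A)"
    using assms(2) unfolding disjoint_cover_def by blast
  then obtain F where F: "\<forall>S\<in>SS. \<Union>(F S) = S \<and> r_disjoint r (F S) \<and> (\<forall>A\<in>F S. diam_le D A)"
    by (rule bchoice[THEN exE])
  have "\<Union>(\<Union>S\<in>SS. F S) = (\<Union>S\<in>SS. \<Union>(F S))"
    by blast
  also have "\<dots> = \<Union>SS"
    using F by simp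
  finally have "\<Union>(\<Union>S\<in>SS. F S) = \<Union>SS" .
  moreover have "r_disjoint r (\<Union>S\<in>SS. F S)"
    unfolding r_disjoint_def
  proof (intro ballI impI)
    fix A B a b assume "A \<in> (\<Union>S\<in>SS. F S)" "B \<in> (\<Union>S\<in>SS. F S)" "A \<noteq> B" "a \<in> A" "b \<in> B"
    then obtain S1 S2 where "S1 \<in> SS" "A \<in> F S1" "S2 \<in> SS" "B \<in> F S2"
      by blast
    moreover from this have "a \<in> S1" "b \<in> S2"
      using F \<open>a \<in> A\<close> \<open>b \<in> B\<close> by blast+
    ultimately show "r \<le> dist a b"
      using F assms(1) \<open>A \<noteq> B\<close> \<open>a \<in> A\<close> \<open>b \<in> B\<close> unfolding r_disjoint_def by metis
  qed
  moreover have "\<forall>A\<in>(\<Union>S\<in>SS. F S). diam_le D A"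
    using F by blast
  ultimately show ?thesis
    unfolding disjoint_cover_def by (intro exI[of _ "\<Union>S\<in>SS. F S"] conjI)
qed

section \<open>The Kolmogorov trick\<close>

text \<open>Every point of \<open>S\<close> lies in all but at most \<open>d\<close> of the \<open>k + 1\<close> families: the form into which
  the Kolmogorov trick turns a \<open>(d+1)\<close>-coloured cover.\<close>

definition kolmogorov_cover ::
    "'a::metric_space set \<Rightarrow> nat \<Rightarrow> nat \<Rightarrow> real \<Rightarrow> real \<Rightarrow> (nat \<Rightarrow> 'a set set) \<Rightarrow> bool" where
  "kolmogorov_cover S k d r D G \<longleftrightarrow>
     (\<forall>l\<le>k. r_disjoint r (G l) \<and> (\<forall>A\<in>G l. A \<subseteq> S \<and> diam_le D A)) \<and>
     (\<forall>x\<in>S. k + 1 - d \<le> card {l\<in>{..k}. x \<in> \<Union>(G l)})"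

lemma kolmogorov_coverD:
  assumes "kolmogorov_cover S k d r D G" "l \<le> k"
  shows "r_disjoint r (G l)" "\<And>A. A \<in> G l \<Longrightarrow> A \<subseteq> S" "\<And>A. A \<in> G l \<Longrightarrow> diam_le D A"
  using assms unfolding kolmogorov_cover_def by blast+

lemma kolmogorov_cover_multiplicity:
  "kolmogorov_cover S k d r D G \<Longrightarrow> x \<in> S \<Longrightarrow> k + 1 - d \<le> card {l\<in>{..k}. x \<in> \<Union>(G l)}"
  unfolding kolmogorov_cover_def by blast

definition members_near :: "'a::metric_space set set \<Rightarrow> 'a \<Rightarrow> real \<Rightarrow> 'a set set" where
  "members_near F x t = {U\<in>F. \<exists>u\<in>U. dist x u < t}"

definition stable_at :: "'a::metric_space set set \<Rightarrow> real \<Rightarrow> nat \<Rightarrow> 'a \<Rightarrow> bool" where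
  "stable_at F \<epsilon> l x \<longleftrightarrow> members_near F x ((2*real l+1)*\<epsilon>) = members_near F x ((2*real l+2)*\<epsilon>)"

lemma members_near_mono: "s \<le> t \<Longrightarrow> members_near F x s \<subseteq> members_near F x t"
  unfolding members_near_def by force

lemma members_near_gap:
  assumes "U \<in> members_near F x s" "U \<notin> members_near F y t"
  shows "t - s \<le> dist x y"
proof -
  obtain u where u: "U \<in> F" "u \<in> U" "dist x u < s"
    using assms(1) unfolding members_near_def by blast
  then have "t \<le> dist y u"
    using assms(2) unfolding members_near_def by force
  moreover have "dist y u \<le> dist x y + dist x u"
    using dist_triangle[of y u x] by (simp add: dist_commute)
  ultimately show ?thesis
    using u(3) by linarith
qed

lemma members_near_unique:
  assumes "r_disjoint (2*t) F" "U \<in> members_near F x t" "U' \<in> members_near F x t"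
  shows "U = U'"
proof -
  obtain u u' where u: "U \<in> F" "u \<in> U" "dist x u < t" "U' \<in> F" "u' \<in> U'" "dist x u' < t"
    using assms(2,3) unfolding members_near_def by blast
  have "dist u u' \<le> dist x u + dist x u'"
    by (rule dist_triangle3)
  also have "\<dots> < 2*t"
    using u by simp
  finally show ?thesis
    using r_disjointD[OF assms(1)] u by blast
qed

lemma finite_card_members_near:
  assumes "\<And>i. i \<le> d \<Longrightarrow> r_disjoint (2*t) (C i)"
  shows "finite (members_near (\<Union>i\<le>d. C i) x t) \<and> card (members_near (\<Union>i\<le>d. C i) x t) \<le> d + 1"
proof -
  let ?N = "members_near (\<Union>i\<le>d. C i) x t"
  have "\<exists>c\<le>d. U \<in> C c" if "U \<in> ?N" for U
    using that unfolding members_near_def by blast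
  then obtain col where col: "\<And>U. U \<in> ?N \<Longrightarrow> col U \<le> d \<and> U \<in> C (col U)"
    by metis
  have "inj_on col ?N"
  proof (rule inj_onI)
    fix U U' assume U: "U \<in> ?N" and U': "U' \<in> ?N" and "col U = col U'"
    then have "U \<in> members_near (C (col U)) x t" "U' \<in> members_near (C (col U)) x t"
      using col[OF U] col[OF U'] unfolding members_near_def by auto
    moreover have "r_disjoint (2*t) (C (col U))"
      using assms col[OF U] by blast
    ultimately show "U = U'"
      using members_near_unique by blast
  qed
  moreover have "col ` ?N \<subseteq> {..d}"
    using col by blast
  ultimately have "finite ?N" "card ?N \<le> card {..d}"
    using inj_on_finite card_inj_on_le by blast+
  then show ?thesis
    by simp
qed

lemma inj_on_annulus_witness:
  fixes N :: "real \<Rightarrow> 'b set"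
  assumes mono: "\<And>s t. s \<le> t \<Longrightarrow> N s \<subseteq> N t" and "0 < \<epsilon>"
    and w: "\<And>l. l \<in> L \<Longrightarrow> w l \<in> N ((2*real l+2)*\<epsilon>) - N ((2*real l+1)*\<epsilon>)"
  shows "inj_on w L"
proof (rule inj_onI)
  have no: False if "i \<in> L" "j \<in> L" "i < j" "w i = w j" for i j
  proof -
    have "(2*real i+2)*\<epsilon> \<le> (2*real j+1)*\<epsilon>"
      using that(3) \<open>0 < \<epsilon>\<close> by (intro mult_right_mono) auto
    then show False
      using w[OF that(1)] w[OF that(2)] mono that(4) by auto
  qed
  show "i = j" if "i \<in> L" "j \<in> L" "w i = w j" for i j
    using that no[of i j] no[of j i] by (cases i j rule: linorder_cases) auto
qed

locale coloured_cover =
  fixes C :: "nat \<Rightarrow> 'a::metric_space set set" and S :: "'a set" and d k :: nat and \<epsilon> \<beta> :: real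
  assumes cover: "(\<Union>i\<le>d. \<Union>(C i)) = S"
    and disjoint: "\<And>i. i \<le> d \<Longrightarrow> r_disjoint ((4*real k+4)*\<epsilon>) (C i)"
    and members_bounded: "\<And>i A. i \<le> d \<Longrightarrow> A \<in> C i \<Longrightarrow> diam_le \<beta> A"
    and eps: "0 < \<epsilon>"
begin

definition members :: "'a set set" where
  "members = (\<Union>i\<le>d. C i)"

definition near :: "nat \<Rightarrow> 'a \<Rightarrow> 'a set set" where
  "near l x = members_near members x ((2*real l+2)*\<epsilon>)"

definition level :: "nat \<Rightarrow> 'a set set" where
  "level l = (\<lambda>x. {z\<in>S. stable_at members \<epsilon> l z \<and> near l z = near l x}) ` {x\<in>S. stable_at members \<epsilon> l x}"

lemma level_subset: "A \<in> level l \<Longrightarrow> A \<subseteq> S"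
  unfolding level_def by blast

lemma own_member:
  assumes "x \<in> S"
  obtains c U where "c \<le> d" "U \<in> C c" "\<And>t. 0 < t \<Longrightarrow> U \<in> members_near members x t"
proof -
  obtain c U where "c \<le> d" "U \<in> C c" "x \<in> U"
    using assms cover by blast
  moreover have "U \<in> members_near members x t" if "0 < t" for t
    using calculation that unfolding members_def members_near_def by (auto intro!: bexI[of _ x])
  ultimately show thesis
    using that by blast
qed

text \<open>If \<open>x\<close> is unstable at level \<open>l\<close>, some member meets the annulus of radii \<open>(2l+1)\<epsilon>\<close> and
  \<open>(2l+2)\<epsilon>\<close> around \<open>x\<close>. These annuli are disjoint, each colour has at most one member near \<open>x\<close>, and
  the member containing \<open>x\<close> meets none of them.\<close>

lemma card_unstable_levels:
  assumes "x \<in> S"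
  shows "card {l\<in>{..k}. \<not> stable_at members \<epsilon> l x} \<le> d"
proof -
  obtain c0 U0 where U0: "c0 \<le> d" "U0 \<in> C c0" "\<And>t. 0 < t \<Longrightarrow> U0 \<in> members_near members x t"
    using own_member[OF assms] by blast
  define L where "L = {l\<in>{..k}. \<not> stable_at members \<epsilon> l x}"
  define N where "N t = members_near members x t" for t
  have N_mono: "N s \<subseteq> N t" if "s \<le> t" for s t
    unfolding N_def using that by (rule members_near_mono)
  have "\<exists>U. U \<in> N ((2*real l+2)*\<epsilon>) - N ((2*real l+1)*\<epsilon>)" if "l \<in> L" for l
  proof -
    have "N ((2*real l+1)*\<epsilon>) \<subseteq> N ((2*real l+2)*\<epsilon>)"
      using eps by (intro N_mono) simp
    moreover have "N ((2*real l+1)*\<epsilon>) \<noteq> N ((2*real l+2)*\<epsilon>)"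
      using that unfolding L_def stable_at_def N_def by blast
    ultimately show ?thesis
      by blast
  qed
  then obtain w where w: "\<And>l. l \<in> L \<Longrightarrow> w l \<in> N ((2*real l+2)*\<epsilon>) - N ((2*real l+1)*\<epsilon>)"
    by metis
  have "inj_on w L"
    using inj_on_annulus_witness[OF N_mono eps w] by blast
  moreover have "w ` L \<subseteq> N ((2*real k+2)*\<epsilon>) - {U0}"
  proof
    fix U assume "U \<in> w ` L"
    then obtain l where l: "l \<in> L" "U = w l"
      by blast
    have "(2*real l+2)*\<epsilon> \<le> (2*real k+2)*\<epsilon>"
      using l eps unfolding L_def by (intro mult_right_mono) auto
    moreover have "U \<noteq> U0"
      using w[OF l(1)] U0(3)[of "(2*real l+1)*\<epsilon>"] eps l(2) unfolding N_def by auto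
    ultimately show "U \<in> N ((2*real k+2)*\<epsilon>) - {U0}"
      using w[OF l(1)] l(2) N_mono by blast
  qed
  moreover have N_card: "finite (N ((2*real k+2)*\<epsilon>)) \<and> card (N ((2*real k+2)*\<epsilon>)) \<le> d + 1"
    unfolding N_def members_def
    by (rule finite_card_members_near) (use disjoint in \<open>simp add: algebra_simps\<close>)
  moreover have "U0 \<in> N ((2*real k+2)*\<epsilon>)"
    using U0(3) eps unfolding N_def by simp
  ultimately have "card L \<le> card (N ((2*real k+2)*\<epsilon>) - {U0})"
    by (metis card_image card_mono finite_Diff)
  also have "\<dots> = card (N ((2*real k+2)*\<epsilon>)) - 1"
    using \<open>U0 \<in> N ((2*real k+2)*\<epsilon>)\<close> N_card by (simp add: card_Diff_singleton)
  also have "\<dots> \<le> d"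
    using N_card by linarith
  finally show ?thesis
    unfolding L_def .
qed

lemma r_disjoint_level: "r_disjoint \<epsilon> (level l)"
  unfolding r_disjoint_def
proof (intro ballI impI)
  fix A B a b assume "A \<in> level l" "B \<in> level l" "A \<noteq> B" "a \<in> A" "b \<in> B"
  then have ne: "near l a \<noteq> near l b" and stable: "stable_at members \<epsilon> l a" "stable_at members \<epsilon> l b"
    unfolding level_def by auto
  \<comment> \<open>by stability, a member seen by \<open>a\<close> but not by \<open>b\<close> is within \<open>(2l+1)\<epsilon>\<close> of \<open>a\<close>\<close>
  have far: "\<epsilon> \<le> dist p q" if "stable_at members \<epsilon> l p" "U \<in> near l p" "U \<notin> near l q" for p q U
    using members_near_gap[of U members p "(2*real l+1)*\<epsilon>" q "(2*real l+2)*\<epsilon>"] that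
    unfolding near_def stable_at_def by (simp add: algebra_simps)
  show "\<epsilon> \<le> dist a b"
  proof (cases "near l a \<subseteq> near l b")
    case True
    then obtain U where "U \<in> near l b" "U \<notin> near l a"
      using ne by blast
    then show ?thesis
      using far[of b U a] stable(2) by (simp add: dist_commute)
  next
    case False
    then show ?thesis
      using far[of a _ b] stable(1) by blast
  qed
qed

lemma diam_le_level:
  assumes l: "l \<le> k" and A: "A \<in> level l"
  shows "diam_le (\<beta> + (4*real k+4)*\<epsilon>) A"
  unfolding diam_le_def
proof (intro ballI)
  fix a b assume "a \<in> A" "b \<in> A"
  then obtain x where x: "x \<in> S" and ab: "near l a = near l x" "near l b = near l x"
    using A unfolding level_def by auto
  obtain c U where c: "c \<le> d" "U \<in> C c" "\<And>t. 0 < t \<Longrightarrow> U \<in> members_near members x t"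
    using own_member[OF x] by blast
  have "U \<in> near l x"
    unfolding near_def using eps by (intro c(3) mult_pos_pos) auto
  then have "U \<in> near l a" "U \<in> near l b"
    using ab by simp_all
  then obtain u u' where u: "u \<in> U" "dist a u < (2*real l+2)*\<epsilon>" "u' \<in> U" "dist b u' < (2*real l+2)*\<epsilon>"
    unfolding near_def members_near_def by blast
  have "dist u u' \<le> \<beta>"
    using members_bounded[OF c(1,2)] u diam_leD by blast
  moreover have "(2*real l+2)*\<epsilon> \<le> (2*real k+2)*\<epsilon>"
    using l eps by (intro mult_right_mono) auto
  moreover have "dist a b \<le> dist a u + dist u u' + dist b u'"
    using dist_triangle[of a b u] dist_triangle[of u b u'] by (simp add: dist_commute)
  ultimately show "dist a b \<le> \<beta> + (4*real k+4)*\<epsilon>"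
    using u by (simp add: algebra_simps)
qed

lemma multiplicity_level:
  assumes x: "x \<in> S"
  shows "k + 1 - d \<le> card {l\<in>{..k}. x \<in> \<Union>(level l)}"
proof -
  define stable where "stable = {l\<in>{..k}. stable_at members \<epsilon> l x}"
  define unstable where "unstable = {l\<in>{..k}. \<not> stable_at members \<epsilon> l x}"
  have "card stable + card unstable = card (stable \<union> unstable)"
    unfolding stable_def unstable_def by (intro card_Un_disjoint[symmetric]) auto
  also have "stable \<union> unstable = {..k}"
    unfolding stable_def unstable_def by blast
  finally have "card stable + card unstable = k + 1"
    by simp
  moreover have "card unstable \<le> d"
    unfolding unstable_def by (rule card_unstable_levels[OF x])
  moreover have "stable \<subseteq> {l\<in>{..k}. x \<in> \<Union>(level l)}"
    using x unfolding stable_def level_def by blast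
  then have "card stable \<le> card {l\<in>{..k}. x \<in> \<Union>(level l)}"
    by (intro card_mono) auto
  ultimately show ?thesis
    by linarith
qed

end

lemma kolmogorov_cover_if_asdim_cover:
  assumes "asdim_cover S d ((4*real k+4)*\<epsilon>) \<beta>" and "0 < \<epsilon>"
  shows "\<exists>G. kolmogorov_cover S k d \<epsilon> (\<beta> + (4*real k+4)*\<epsilon>) G"
proof -
  obtain C where "(\<Union>i\<le>d. \<Union>(C i)) = S" "\<forall>i\<le>d. r_disjoint ((4*real k+4)*\<epsilon>) (C i) \<and> (\<forall>A\<in>C i. diam_le \<beta> A)"
    using assms(1) unfolding asdim_cover_def by blast
  then interpret coloured_cover C S d k \<epsilon> \<beta>
    using assms(2) by unfold_locales auto
  have "\<forall>l\<le>k. r_disjoint \<epsilon> (level l) \<and> (\<forall>A\<in>level l. A \<subseteq> S \<and> diam_le (\<beta> + (4*real k+4)*\<epsilon>) A)"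
    using r_disjoint_level diam_le_level level_subset by blast
  then show ?thesis
    unfolding kolmogorov_cover_def using multiplicity_level by blast
qed

section \<open>Saturation\<close>

locale saturation =
  fixes F QQ :: "'a::metric_space set set" and r g \<rho> K :: real
  assumes F_disjoint: "r_disjoint r F" and F_bounded: "\<And>B. B \<in> F \<Longrightarrow> diam_le g B"
    and QQ_disjoint: "r_disjoint \<rho> QQ" and QQ_bounded: "\<And>Q. Q \<in> QQ \<Longrightarrow> diam_le K Q"
    and r: "0 < r" and g: "0 \<le> g" and K: "0 \<le> K" and scale: "2*r + g < \<rho>"
begin

definition near :: "'a set \<Rightarrow> 'a set \<Rightarrow> bool" where
  "near B Q \<longleftrightarrow> (\<exists>b\<in>B. \<exists>q\<in>Q. dist b q < r)"

lemma near_unique: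
  assumes B: "B \<in> F" and Q: "Q1 \<in> QQ" "Q2 \<in> QQ" and near: "near B Q1" "near B Q2"
  shows "Q1 = Q2"
proof -
  obtain b1 q1 b2 q2 where "b1 \<in> B" "q1 \<in> Q1" "dist b1 q1 < r" "b2 \<in> B" "q2 \<in> Q2" "dist b2 q2 < r"
    using near unfolding near_def by blast
  moreover have "dist b1 b2 \<le> g"
    using F_bounded[OF B] \<open>b1 \<in> B\<close> \<open>b2 \<in> B\<close> diam_leD by blast
  moreover have "dist q1 q2 \<le> dist b1 q1 + dist b1 b2 + dist b2 q2"
    using dist_triangle[of q1 q2 b1] dist_triangle[of b1 q2 b2] by (simp add: dist_commute)
  ultimately have "dist q1 q2 < \<rho>"
    using scale by linarith
  then show ?thesis
    using r_disjointD[OF QQ_disjoint Q \<open>q1 \<in> Q1\<close> \<open>q2 \<in> Q2\<close>] by blast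
qed

text \<open>Pieces are tagged, \<open>Inl Q\<close> for \<open>Q \<in> QQ\<close> and \<open>Inr B\<close> for \<open>B \<in> F\<close>, since a set may occur in
  both families. A piece of \<open>F\<close> is absorbed by the member of \<open>QQ\<close> it comes \<open>r\<close>-close to (unique by
  \<open>near_unique\<close>); \<open>owner\<close> is the tag of the absorbing piece.\<close>

definition pieces :: "('a set + 'a set) set" where
  "pieces = Inl ` QQ \<union> Inr ` F"

definition owner :: "'a set + 'a set \<Rightarrow> 'a set + 'a set" where
  "owner t = (case t of
      Inl Q \<Rightarrow> Inl Q
    | Inr B \<Rightarrow> if \<exists>Q\<in>QQ. near B Q then Inl (SOME Q. Q \<in> QQ \<and> near B Q) else Inr B)"

definition merged :: "'a set + 'a set \<Rightarrow> 'a set" where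
  "merged w = \<Union>{case_sum id id t | t. t \<in> pieces \<and> owner t = w}"

lemma owner_Inl [simp]: "owner (Inl Q) = Inl Q"
  unfolding owner_def by simp

lemma owner_Inr_eq_Inl:
  assumes "B \<in> F"
  shows "owner (Inr B) = Inl Q \<longleftrightarrow> Q \<in> QQ \<and> near B Q"
proof (cases "\<exists>Q\<in>QQ. near B Q")
  case True
  let ?Q0 = "SOME Q. Q \<in> QQ \<and> near B Q"
  from True obtain Q1 where "Q1 \<in> QQ \<and> near B Q1"
    by blast
  then have "?Q0 \<in> QQ \<and> near B ?Q0"
    by (rule someI)
  moreover have "owner (Inr B) = Inl ?Q0"
    using True unfolding owner_def by simp
  ultimately show ?thesis
    using near_unique[OF assms, of ?Q0 Q] by auto
next
  case False
  then show ?thesis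
    unfolding owner_def by simp
qed

lemma owner_eq_Inl:
  assumes "t \<in> pieces" "owner t = Inl Q"
  shows "Q \<in> QQ \<and> (t = Inl Q \<or> (\<exists>B\<in>F. t = Inr B \<and> near B Q))"
proof (cases t)
  case (Inl Q')
  then show ?thesis
    using assms unfolding pieces_def by auto
next
  case (Inr B)
  then show ?thesis
    using assms owner_Inr_eq_Inl[of B Q] unfolding pieces_def by auto
qed

lemma owner_eq_Inr:
  assumes "t \<in> pieces" "owner t = Inr B"
  shows "t = Inr B \<and> B \<in> F"
proof (cases t)
  case (Inr B')
  then show ?thesis
    using assms unfolding pieces_def owner_def by (auto split: if_splits)
qed (use assms in simp)

lemma owner_close:
  assumes "t1 \<in> pieces" "t2 \<in> pieces" "p \<in> case_sum id id t1" "q \<in> case_sum id id t2" "dist p q < r"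
  shows "owner t1 = owner t2"
proof -
  have absorbed: "owner (Inr B) = Inl Q" if "B \<in> F" "Q \<in> QQ" "b \<in> B" "q \<in> Q" "dist b q < r"
    for B Q b q
    using that owner_Inr_eq_Inl[of B Q] unfolding near_def by auto
  show ?thesis
    using assms
  proof (cases t1; cases t2)
    fix Q1 Q2 assume "t1 = Inl Q1" "t2 = Inl Q2"
    then show ?thesis
      using assms r_disjointD[OF QQ_disjoint, of Q1 Q2 p q] scale r g unfolding pieces_def by auto
  next
    fix Q1 B2 assume "t1 = Inl Q1" "t2 = Inr B2"
    then show ?thesis
      using assms absorbed[of B2 Q1 q p] unfolding pieces_def by (auto simp: dist_commute)
  next
    fix B1 Q2 assume "t1 = Inr B1" "t2 = Inl Q2"
    then show ?thesis
      using assms absorbed[of B1 Q2 p q] unfolding pieces_def by auto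
  next
    fix B1 B2 assume "t1 = Inr B1" "t2 = Inr B2"
    then show ?thesis
      using assms r_disjointD[OF F_disjoint, of B1 B2 p q] unfolding pieces_def by auto
  qed
qed

lemma mem_merged: "p \<in> merged w \<longleftrightarrow> (\<exists>t\<in>pieces. owner t = w \<and> p \<in> case_sum id id t)"
  unfolding merged_def by auto

lemma Union_merged: "\<Union>(merged ` owner ` pieces) = \<Union>F \<union> \<Union>QQ"
proof -
  have "\<Union>(case_sum id id ` pieces) = \<Union>F \<union> \<Union>QQ"
    unfolding pieces_def by (simp add: image_Un image_image Un_commute)
  moreover have "\<Union>(merged ` owner ` pieces) = \<Union>(case_sum id id ` pieces)"
  proof
    show "\<Union>(merged ` owner ` pieces) \<subseteq> \<Union>(case_sum id id ` pieces)"
      by (auto simp: mem_merged)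
    show "\<Union>(case_sum id id ` pieces) \<subseteq> \<Union>(merged ` owner ` pieces)"
    proof
      fix p assume "p \<in> \<Union>(case_sum id id ` pieces)"
      then obtain t where "t \<in> pieces" "p \<in> case_sum id id t"
        by blast
      then have "p \<in> merged (owner t)" "merged (owner t) \<in> merged ` owner ` pieces"
        unfolding mem_merged by blast+
      then show "p \<in> \<Union>(merged ` owner ` pieces)"
        by blast
    qed
  qed
  ultimately show ?thesis
    by simp
qed

lemma r_disjoint_merged: "r_disjoint r (merged ` owner ` pieces)"
  unfolding r_disjoint_def
proof (intro ballI impI)
  fix A B p q assume "A \<in> merged ` owner ` pieces" "B \<in> merged ` owner ` pieces" "A \<noteq> B" "p \<in> A" "q \<in> B"
  then obtain w1 w2 where w: "A = merged w1" "B = merged w2" "p \<in> merged w1" "q \<in> merged w2"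
    by blast
  then obtain t1 t2 where t: "t1 \<in> pieces" "owner t1 = w1" "p \<in> case_sum id id t1"
    "t2 \<in> pieces" "owner t2 = w2" "q \<in> case_sum id id t2"
    unfolding mem_merged by blast
  show "r \<le> dist p q"
  proof (rule ccontr)
    assume "\<not> r \<le> dist p q"
    then have "owner t1 = owner t2"
      using owner_close[of t1 t2 p q] t by simp
    then show False
      using w(1,2) t(2,5) \<open>A \<noteq> B\<close> by simp
  qed
qed

lemma merged_Inl_near:
  assumes "p \<in> merged (Inl Q)"
  shows "\<exists>q\<in>Q. dist p q \<le> g + r"
proof -
  obtain t where t: "t \<in> pieces" "owner t = Inl Q" "p \<in> case_sum id id t"
    using assms unfolding mem_merged by blast
  from owner_eq_Inl[OF t(1,2)] consider "t = Inl Q" | B where "B \<in> F" "t = Inr B" "near B Q"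
    by blast
  then show ?thesis
  proof cases
    case 1
    then show ?thesis
      using t(3) r g by (intro bexI[of _ p]) auto
  next
    case 2
    then obtain b q where "b \<in> B" "q \<in> Q" "dist b q < r"
      unfolding near_def by blast
    moreover have "p \<in> B"
      using 2 t(3) by simp
    then have "dist p b \<le> g"
      using F_bounded 2 \<open>b \<in> B\<close> diam_leD by blast
    ultimately show ?thesis
      using dist_triangle[of p q b] by force
  qed
qed

lemma diam_le_merged:
  assumes "w \<in> owner ` pieces"
  shows "diam_le (K + 2*r + 2*g) (merged w)"
proof (cases w)
  case (Inl Q)
  obtain t where "t \<in> pieces" "owner t = Inl Q"
    using assms Inl by blast
  then have "Q \<in> QQ"
    using owner_eq_Inl by blast
  show ?thesis
    unfolding diam_le_def
  proof (intro ballI)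
    fix a b assume "a \<in> merged w" "b \<in> merged w"
    then obtain qa qb where "qa \<in> Q" "dist a qa \<le> g + r" "qb \<in> Q" "dist b qb \<le> g + r"
      using merged_Inl_near Inl by blast
    moreover have "dist qa qb \<le> K"
      using QQ_bounded \<open>Q \<in> QQ\<close> \<open>qa \<in> Q\<close> \<open>qb \<in> Q\<close> diam_leD by blast
    moreover have "dist a b \<le> dist a qa + dist qa qb + dist b qb"
      using dist_triangle[of a b qa] dist_triangle[of qa b qb] by (simp add: dist_commute)
    ultimately show "dist a b \<le> K + 2*r + 2*g"
      by linarith
  qed
next
  case (Inr B)
  have "merged w \<subseteq> B"
  proof
    fix p assume "p \<in> merged w"
    then obtain t where "t \<in> pieces" "owner t = Inr B" "p \<in> case_sum id id t"
      using Inr unfolding mem_merged by blast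
    then have "t = Inr B" "p \<in> case_sum id id t"
      using owner_eq_Inr by blast+
    then show "p \<in> B"
      by simp
  qed
  moreover have "B \<in> F"
    using assms Inr owner_eq_Inr by blast
  ultimately have "diam_le g (merged w)"
    using F_bounded diam_le_subset by blast
  then show ?thesis
    by (rule diam_le_mono) (use r g K in linarith)
qed

end

lemma disjoint_cover_saturate:
  fixes S :: "'a::metric_space set"
  assumes S: "disjoint_cover S r g" and QQ: "r_disjoint \<rho> QQ" "\<And>Q. Q \<in> QQ \<Longrightarrow> diam_le K Q"
    and "0 < r" "0 \<le> g" "0 \<le> K" "2*r + g < \<rho>"
  shows "disjoint_cover (S \<union> \<Union>QQ) r (K + 2*r + 2*g)"
proof -
  obtain F where F: "\<Union>F = S" "r_disjoint r F" "\<forall>B\<in>F. diam_le g B"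
    using S unfolding disjoint_cover_def by blast
  interpret saturation F QQ r g \<rho> K
    using F QQ assms(4-) by unfold_locales auto
  show ?thesis
    unfolding disjoint_cover_def
    using Union_merged r_disjoint_merged diam_le_merged F(1)
    by (intro exI[of _ "merged ` owner ` pieces"]) auto
qed

text \<open>The bound of \<open>disjoint_cover_saturate\<close> iterated over layers, layer \<open>a\<close> being added at
  the scale \<open>2r + saturation_bound r K a + 1\<close> with diameter bound \<open>K\<close> of that scale.\<close>

fun saturation_bound :: "real \<Rightarrow> (real \<Rightarrow> real) \<Rightarrow> nat \<Rightarrow> real" where
  "saturation_bound r K 0 = 0"
| "saturation_bound r K (Suc a) =
     K (2*r + saturation_bound r K a + 1) + 2*r + 2 * saturation_bound r K a"

lemma saturation_bound_nonneg:
  assumes "0 \<le> r" "\<And>t. 0 < t \<Longrightarrow> 0 \<le> K t"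
  shows "0 \<le> saturation_bound r K a"
proof (induction a)
  case (Suc a)
  then have "0 \<le> K (2*r + saturation_bound r K a + 1)"
    using assms by (intro assms(2)) linarith
  then show ?case
    using Suc assms(1) by simp
qed simp

lemma disjoint_cover_layers:
  assumes r: "0 < r" and K: "\<And>t. 0 < t \<Longrightarrow> 0 \<le> K t"
    and "\<And>a. a < m \<Longrightarrow> r_disjoint (2*r + saturation_bound r K a + 1) (QQ a)"
    and "\<And>a Q. a < m \<Longrightarrow> Q \<in> QQ a \<Longrightarrow> diam_le (K (2*r + saturation_bound r K a + 1)) Q"
  shows "disjoint_cover (\<Union>a<m. \<Union>(QQ a)) r (saturation_bound r K m)"
  using assms(3,4)
proof (induction m)
  case 0
  then show ?case
    using disjoint_cover_empty by simp
next
  case (Suc m)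
  let ?\<gamma> = "saturation_bound r K m"
  have "0 \<le> ?\<gamma>"
    using saturation_bound_nonneg r K by (metis less_eq_real_def)
  moreover have "disjoint_cover (\<Union>a<m. \<Union>(QQ a)) r ?\<gamma>"
    using Suc by simp
  ultimately have "disjoint_cover ((\<Union>a<m. \<Union>(QQ a)) \<union> \<Union>(QQ m)) r (K (2*r + ?\<gamma> + 1) + 2*r + 2*?\<gamma>)"
    using Suc.prems r K by (intro disjoint_cover_saturate) auto
  then show ?case
    by (simp add: lessThan_Suc Un_commute)
qed

section \<open>Uniform covers of preimages\<close>

lemma bounded_thickening:
  assumes "bounded K"
  shows "bounded (\<Union>z\<in>K. cball z e)"
proof -
  obtain c b where "\<forall>y\<in>K. dist c y \<le> b"
    using assms unfolding bounded_def by blast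
  then have "\<forall>y\<in>(\<Union>z\<in>K. cball z e). dist c y \<le> b + e"
    by (smt (verit, best) UN_E dist_triangle mem_cball)
  then show ?thesis
    unfolding bounded_def by blast
qed

lemma far_sequence_exists:
  fixes VV :: "'a::metric_space set set" and P :: "nat \<Rightarrow> 'a set \<Rightarrow> bool"
  assumes bdd: "\<And>V. V \<in> VV \<Longrightarrow> bounded V"
    and avoid: "\<And>K s. bounded K \<Longrightarrow> \<exists>V\<in>VV. P s V \<and> (\<forall>y\<in>V. \<forall>z\<in>K. real s \<le> dist y z)"
  shows "\<exists>V. \<forall>s. V s \<in> VV \<and> P s (V s) \<and> (\<forall>t<s. \<forall>y\<in>V s. \<forall>z\<in>V t. real s \<le> dist y z)"
proof -
  have "\<forall>K s. \<exists>V. bounded K \<longrightarrow> V \<in> VV \<and> P s V \<and> (\<forall>y\<in>V. \<forall>z\<in>K. real s \<le> dist y z)"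
    using avoid by blast
  then obtain nxt where nxt: "\<And>K s. bounded K \<Longrightarrow>
      nxt K s \<in> VV \<and> P s (nxt K s) \<and> (\<forall>y\<in>nxt K s. \<forall>z\<in>K. real s \<le> dist y z)"
    by metis
  define acc where "acc = rec_nat {} (\<lambda>s A. A \<union> nxt A s)"
  define V where "V s = nxt (acc s) s" for s
  have acc: "acc s = (\<Union>t<s. V t) \<and> bounded (acc s)" for s
  proof (induction s)
    case 0
    then show ?case
      unfolding acc_def by simp
  next
    case (Suc s)
    then have "V s \<in> VV"
      using nxt unfolding V_def by blast
    then show ?case
      using Suc bdd unfolding acc_def V_def by (auto simp: lessThan_Suc)
  qed
  have "V s \<in> VV \<and> P s (V s) \<and> (\<forall>t<s. \<forall>y\<in>V s. \<forall>z\<in>V t. real s \<le> dist y z)" for s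
    using nxt[of "acc s" s] acc[of s] unfolding V_def by blast
  then show ?thesis
    by blast
qed

lemma asdim_le_0_far_sequence:
  fixes V :: "nat \<Rightarrow> 'a::metric_space set"
  assumes bnd: "\<And>s. diam_le D (V s)"
    and far: "\<And>s t y z. t < s \<Longrightarrow> y \<in> V s \<Longrightarrow> z \<in> V t \<Longrightarrow> real s \<le> dist y z"
  shows "asdim_le (\<Union>s. V s) 0"
  unfolding asdim_le_iff_asdim_cover asdim_cover_0_iff
proof (intro allI impI)
  fix r :: real assume "r > 0"
  define s0 where "s0 = nat \<lceil>r\<rceil>"
  define F where "F = insert (\<Union>t<s0. V t) (V ` {s0..})"
  have "bounded (\<Union>t<s0. V t)"
    using bnd bounded_iff_diam_le by blast
  then obtain e where e: "diam_le e (\<Union>t<s0. V t)"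
    unfolding bounded_iff_diam_le by blast
  have far_r: "r \<le> dist y z" if "y \<in> V s" "z \<in> V t" "s \<noteq> t" "s0 \<le> max s t" for y z s t
  proof -
    have "r \<le> real (max s t)"
      using that(4) unfolding s0_def by linarith
    also have "\<dots> \<le> dist y z"
      using far[of t s y z] far[of s t z y] that(1-3) by (cases "t < s") (auto simp: dist_commute)
    finally show ?thesis .
  qed
  have "\<Union>F = (\<Union>s. V s)"
  proof
    show "(\<Union>s. V s) \<subseteq> \<Union>F"
    proof
      fix y assume "y \<in> (\<Union>s. V s)"
      then obtain s where "y \<in> V s"
        by blast
      then show "y \<in> \<Union>F"
        unfolding F_def by (cases "s < s0") auto
    qed
  qed (auto simp: F_def)
  moreover have "r_disjoint r F"
    unfolding r_disjoint_def
  proof (intro ballI impI)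
    fix A B a b assume "A \<in> F" "B \<in> F" "A \<noteq> B" "a \<in> A" "b \<in> B"
    have index: "\<exists>s. a \<in> V s \<and> (A = V s \<and> s0 \<le> s \<or> A = (\<Union>t<s0. V t) \<and> s < s0)"
      if "A \<in> F" "a \<in> A" for A a
      using that unfolding F_def by auto
    obtain s t where "a \<in> V s" "A = V s \<and> s0 \<le> s \<or> A = (\<Union>t<s0. V t) \<and> s < s0"
      "b \<in> V t" "B = V t \<and> s0 \<le> t \<or> B = (\<Union>t<s0. V t) \<and> t < s0"
      using index \<open>A \<in> F\<close> \<open>a \<in> A\<close> \<open>B \<in> F\<close> \<open>b \<in> B\<close> by meson
    moreover from this have "s \<noteq> t" "s0 \<le> max s t"
      using \<open>A \<noteq> B\<close> by auto
    ultimately show "r \<le> dist a b"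
      using far_r by blast
  qed
  moreover have "\<forall>A\<in>F. diam_le (max e D) A"
    unfolding F_def using diam_le_mono[OF e] diam_le_mono[OF bnd] by auto
  ultimately show "\<exists>D. disjoint_cover (\<Union>s. V s) r D"
    unfolding disjoint_cover_def by blast
qed

lemma asdim_le_preimage_bounded:
  assumes "asdim_fun X f \<le> enat n" "bounded B"
  shows "asdim_le (X \<inter> f -` B) n"
proof -
  have "bounded (f ` (X \<inter> f -` B))"
    using assms(2) by (rule bounded_subset) blast
  then show ?thesis
    by (intro asdim_le_of_asdim_fun[OF assms(1)] asdim_le_0_if_bounded) auto
qed

text \<open>Near a bounded set the covers of preimages are uniform, so
  members of \<open>VV\<close> with bad covers can be found arbitrarily far away.\<close>

lemma far_member_without_cover:
  fixes f :: "'a::metric_space \<Rightarrow> 'b::metric_space"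
  assumes f: "asdim_fun X f \<le> enat n" and \<rho>: "0 < \<rho>" and VV: "\<And>V. V \<in> VV \<Longrightarrow> diam_le D V"
    and bad: "\<And>\<beta>. \<exists>V\<in>VV. \<not> asdim_cover (X \<inter> f -` V) n \<rho> \<beta>" and K: "bounded K"
  shows "\<exists>V\<in>VV. \<not> asdim_cover (X \<inter> f -` V) n \<rho> (real s) \<and> (\<forall>y\<in>V. \<forall>z\<in>K. real s \<le> dist y z)"
proof -
  define K' where "K' = (\<Union>z\<in>K. cball z (real s + D))"
  have "asdim_le (X \<inter> f -` K') n"
    unfolding K'_def by (rule asdim_le_preimage_bounded[OF f bounded_thickening[OF K]])
  then obtain \<beta> where \<beta>: "asdim_cover (X \<inter> f -` K') n \<rho> \<beta>"
    using \<rho> unfolding asdim_le_iff_asdim_cover by blast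
  obtain V where V: "V \<in> VV" "\<not> asdim_cover (X \<inter> f -` V) n \<rho> (max \<beta> (real s))"
    using bad by blast
  have "\<not> asdim_cover (X \<inter> f -` V) n \<rho> \<beta>'" if "\<beta>' \<le> max \<beta> (real s)" for \<beta>'
    using V(2) asdim_cover_mono that by blast
  then have not_cover: "\<not> asdim_cover (X \<inter> f -` V) n \<rho> \<beta>" "\<not> asdim_cover (X \<inter> f -` V) n \<rho> (real s)"
    by simp_all
  then have "\<not> V \<subseteq> K'"
    using asdim_cover_subset[OF \<beta>, of "X \<inter> f -` V"] by blast
  moreover have "V \<subseteq> K'" if "y \<in> V" "z \<in> K" "dist y z < real s" for y z
  proof
    fix y' assume "y' \<in> V"
    then have "dist z y' \<le> real s + D"
      using that dist_triangle[of z y' y] diam_leD[OF VV[OF V(1)] \<open>y' \<in> V\<close> \<open>y \<in> V\<close>]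
      by (simp add: dist_commute)
    then show "y' \<in> K'"
      unfolding K'_def using \<open>z \<in> K\<close> by auto
  qed
  ultimately show ?thesis
    using V(1) not_cover(2) by (meson not_le)
qed

lemma uniform_asdim_cover_preimages:
  fixes f :: "'a::metric_space \<Rightarrow> 'b::metric_space"
  assumes f: "asdim_fun X f \<le> enat n" and \<rho>: "0 < \<rho>" and VV: "\<And>V. V \<in> VV \<Longrightarrow> diam_le D V"
  shows "\<exists>\<beta>. \<forall>V\<in>VV. asdim_cover (X \<inter> f -` V) n \<rho> \<beta>"
proof (rule ccontr)
  assume "\<not> ?thesis"
  then have bad: "\<exists>V\<in>VV. \<not> asdim_cover (X \<inter> f -` V) n \<rho> \<beta>" for \<beta>
    by blast
  have VV_bounded: "bounded V" if "V \<in> VV" for V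
    using VV[OF that] bounded_iff_diam_le by blast
  have far: "\<exists>V\<in>VV. \<not> asdim_cover (X \<inter> f -` V) n \<rho> (real s) \<and> (\<forall>y\<in>V. \<forall>z\<in>K. real s \<le> dist y z)"
    if "bounded K" for K s
    using far_member_without_cover[OF f \<rho> VV bad that] .
  have "\<exists>Vs. \<forall>s. Vs s \<in> VV \<and> \<not> asdim_cover (X \<inter> f -` Vs s) n \<rho> (real s) \<and>
      (\<forall>t<s. \<forall>y\<in>Vs s. \<forall>z\<in>Vs t. real s \<le> dist y z)"
    by (rule far_sequence_exists[where P = "\<lambda>s V. \<not> asdim_cover (X \<inter> f -` V) n \<rho> (real s)"])
      (erule VV_bounded, erule far)
  then obtain Vs where "\<forall>s. Vs s \<in> VV \<and> \<not> asdim_cover (X \<inter> f -` Vs s) n \<rho> (real s) \<and>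
      (\<forall>t<s. \<forall>y\<in>Vs s. \<forall>z\<in>Vs t. real s \<le> dist y z)"
    by blast
  then have Vs: "\<And>s. Vs s \<in> VV" "\<And>s. \<not> asdim_cover (X \<inter> f -` Vs s) n \<rho> (real s)"
    "\<And>s t y z. t < s \<Longrightarrow> y \<in> Vs s \<Longrightarrow> z \<in> Vs t \<Longrightarrow> real s \<le> dist y z"
    by blast+
  \<comment> \<open>the far-apart bad members form a set of asymptotic dimension \<open>0\<close>, so their preimage has a cover\<close>
  have "asdim_le (\<Union>s. Vs s) 0"
    using VV Vs(1,3) by (intro asdim_le_0_far_sequence) blast+
  then have "asdim_le (f ` (X \<inter> f -` (\<Union>s. Vs s))) 0"
    by (rule asdim_le_subset) blast
  then have "asdim_le (X \<inter> f -` (\<Union>s. Vs s)) n"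
    by (intro asdim_le_of_asdim_fun[OF f]) auto
  then obtain \<beta> where "asdim_cover (X \<inter> f -` (\<Union>s. Vs s)) n \<rho> \<beta>"
    using \<rho> unfolding asdim_le_iff_asdim_cover by blast
  moreover have "X \<inter> f -` Vs (nat \<lceil>\<beta>\<rceil>) \<subseteq> X \<inter> f -` (\<Union>s. Vs s)"
    by blast
  ultimately have "asdim_cover (X \<inter> f -` Vs (nat \<lceil>\<beta>\<rceil>)) n \<rho> \<beta>"
    by (rule asdim_cover_subset)
  then have "asdim_cover (X \<inter> f -` Vs (nat \<lceil>\<beta>\<rceil>)) n \<rho> (real (nat \<lceil>\<beta>\<rceil>))"
    by (rule asdim_cover_mono) linarith
  then show False
    using Vs(2) by blast
qed

section \<open>Covering the domain\<close>

lemma large_scale_uniform_close: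
  assumes "large_scale_uniform X f" "0 \<le> r"
  obtains R where "0 < R" "\<And>x y. x \<in> X \<Longrightarrow> y \<in> X \<Longrightarrow> dist x y < r \<Longrightarrow> dist (f x) (f y) < R"
proof -
  obtain c where c: "\<forall>r\<ge>0. \<forall>x\<in>X. \<forall>y\<in>X. dist x y \<le> r \<longrightarrow> dist (f x) (f y) \<le> c r"
    using assms(1) unfolding large_scale_uniform_def by blast
  show ?thesis
  proof (rule that[of "\<bar>c r\<bar> + 1"])
    fix x y assume "x \<in> X" "y \<in> X" "dist x y < r"
    then have "dist (f x) (f y) \<le> c r"
      using c assms(2) by simp
    then show "dist (f x) (f y) < \<bar>c r\<bar> + 1"
      by linarith
  qed simp
qed

lemma card_Int_nonempty:
  assumes "I \<subseteq> U" "C \<subseteq> U" "finite U" "card U < card I + card C"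
  shows "I \<inter> C \<noteq> {}"
proof
  assume "I \<inter> C = {}"
  then have "card I + card C = card (I \<union> C)"
    using assms(1-3) by (metis card_Un_disjoint finite_subset)
  also have "\<dots> \<le> card U"
    using assms by (intro card_mono) auto
  finally show False
    using assms(4) by linarith
qed

lemma r_disjoint_preimages:
  assumes "r_disjoint R W" "\<And>x y. x \<in> E \<Longrightarrow> y \<in> E \<Longrightarrow> dist x y < r \<Longrightarrow> dist (f x) (f y) < R"
  shows "r_disjoint r ((\<lambda>W'. E \<inter> f -` W') ` W)"
  unfolding r_disjoint_def
proof (intro ballI impI)
  fix A B x y assume "A \<in> (\<lambda>W'. E \<inter> f -` W') ` W" "B \<in> (\<lambda>W'. E \<inter> f -` W') ` W" "A \<noteq> B" "x \<in> A" "y \<in> B"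
  then obtain W1 W2 where "W1 \<in> W" "W2 \<in> W" "W1 \<noteq> W2" "x \<in> E" "f x \<in> W1" "y \<in> E" "f y \<in> W2"
    by blast
  then show "r \<le> dist x y"
    using assms r_disjointD[OF assms(1)] by (meson not_le)
qed

lemma r_disjoint_restrict_preimage:
  assumes V: "r_disjoint R V" and W: "diam_le D W" "D < R"
    and G: "\<And>A. A \<in> V \<Longrightarrow> r_disjoint \<rho> (G A)" "\<And>A Z. A \<in> V \<Longrightarrow> Z \<in> G A \<Longrightarrow> f ` Z \<subseteq> A"
  shows "r_disjoint \<rho> ((\<lambda>Z. Z \<inter> f -` W) ` (\<Union>A\<in>V. G A))"
  unfolding r_disjoint_def
proof (intro ballI impI)
  fix B1 B2 p q assume B: "B1 \<in> (\<lambda>Z. Z \<inter> f -` W) ` (\<Union>A\<in>V. G A)" "B2 \<in> (\<lambda>Z. Z \<inter> f -` W) ` (\<Union>A\<in>V. G A)"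
    and "B1 \<noteq> B2" "p \<in> B1" "q \<in> B2"
  then obtain A1 Z1 A2 Z2 where Z: "A1 \<in> V" "Z1 \<in> G A1" "A2 \<in> V" "Z2 \<in> G A2" "Z1 \<noteq> Z2"
    and pq: "p \<in> Z1" "f p \<in> W" "q \<in> Z2" "f q \<in> W"
    by blast
  have "dist (f p) (f q) < R"
    using diam_leD[OF W(1) pq(2,4)] W(2) by linarith
  then have "A1 = A2"
    using r_disjointD[OF V Z(1,3)] G(2) Z pq by blast
  then show "\<rho> \<le> dist p q"
    using G(1) Z pq unfolding r_disjoint_def by blast
qed

lemma disjoint_cover_layers_preimage:
  fixes f :: "'a::metric_space \<Rightarrow> 'b::metric_space"
  assumes r: "0 < r" and K: "\<And>t. 0 < t \<Longrightarrow> 0 \<le> K t"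
    and V: "\<And>a. a < m \<Longrightarrow> r_disjoint R (V a)" and W: "diam_le D W" "D < R"
    and G: "\<And>a A. a < m \<Longrightarrow> A \<in> V a \<Longrightarrow> r_disjoint (2*r + saturation_bound r K a + 1) (G a A)"
      "\<And>a A Z. a < m \<Longrightarrow> A \<in> V a \<Longrightarrow> Z \<in> G a A \<Longrightarrow>
         f ` Z \<subseteq> A \<and> diam_le (K (2*r + saturation_bound r K a + 1)) Z"
  shows "disjoint_cover ((\<Union>a<m. \<Union>A\<in>V a. \<Union>(G a A)) \<inter> f -` W) r (saturation_bound r K m)"
proof -
  define QQ where "QQ a = (\<lambda>Z. Z \<inter> f -` W) ` (\<Union>A\<in>V a. G a A)" for a
  have "(\<Union>a<m. \<Union>A\<in>V a. \<Union>(G a A)) \<inter> f -` W = (\<Union>a<m. \<Union>(QQ a))"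
    unfolding QQ_def by blast
  moreover have "disjoint_cover (\<Union>a<m. \<Union>(QQ a)) r (saturation_bound r K m)"
  proof (rule disjoint_cover_layers[OF r K])
    fix a assume "a < m"
    then show "r_disjoint (2*r + saturation_bound r K a + 1) (QQ a)"
      unfolding QQ_def using V W G by (intro r_disjoint_restrict_preimage) auto
    fix Q assume "Q \<in> QQ a"
    then show "diam_le (K (2*r + saturation_bound r K a + 1)) Q"
      unfolding QQ_def using G(2) \<open>a < m\<close> diam_le_subset by blast
  qed
  ultimately show ?thesis
    by simp
qed

lemma uniform_kolmogorov_covers_preimages:
  fixes f :: "'a::metric_space \<Rightarrow> 'b::metric_space"
  assumes f: "asdim_fun X f \<le> enat n" and VV: "\<And>V. V \<in> VV \<Longrightarrow> diam_le D V"
  obtains K G where "\<And>\<rho>. 0 < \<rho> \<Longrightarrow> 0 \<le> K \<rho>"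
    "\<And>\<rho> A. 0 < \<rho> \<Longrightarrow> A \<in> VV \<Longrightarrow> kolmogorov_cover (X \<inter> f -` A) k n \<rho> (K \<rho>) (G \<rho> A)"
proof -
  have "\<exists>\<beta>. 0 \<le> \<beta> \<and> (\<forall>A\<in>VV. \<exists>G. kolmogorov_cover (X \<inter> f -` A) k n \<rho> \<beta> G)" if "0 < \<rho>" for \<rho>
  proof -
    have "0 < (4*real k+4)*\<rho>"
      using that by simp
    then obtain \<beta> where "\<forall>A\<in>VV. asdim_cover (X \<inter> f -` A) n ((4*real k+4)*\<rho>) \<beta>"
      using uniform_asdim_cover_preimages[OF f _ VV] by blast
    then have "\<forall>A\<in>VV. asdim_cover (X \<inter> f -` A) n ((4*real k+4)*\<rho>) (max 0 \<beta>)"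
      using asdim_cover_mono max.cobounded2 by blast
    then have "\<forall>A\<in>VV. \<exists>G. kolmogorov_cover (X \<inter> f -` A) k n \<rho> (max 0 \<beta> + (4*real k+4)*\<rho>) G"
      using kolmogorov_cover_if_asdim_cover that by blast
    moreover have "0 \<le> max 0 \<beta> + (4*real k+4)*\<rho>"
      using that by simp
    ultimately show ?thesis
      by blast
  qed
  then obtain K where K: "\<And>\<rho>. 0 < \<rho> \<Longrightarrow> 0 \<le> K \<rho> \<and> (\<forall>A\<in>VV. \<exists>G. kolmogorov_cover (X \<inter> f -` A) k n \<rho> (K \<rho>) G)"
    by metis
  then obtain G where "\<And>\<rho> A. 0 < \<rho> \<Longrightarrow> A \<in> VV \<Longrightarrow> kolmogorov_cover (X \<inter> f -` A) k n \<rho> (K \<rho>) (G \<rho> A)"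
    by metis
  with K that show ?thesis
    by blast
qed

lemma disjoint_cover_Union_preimages:
  fixes f :: "'a::metric_space \<Rightarrow> 'b::metric_space"
  assumes r: "0 < r" and K: "\<And>t. 0 < t \<Longrightarrow> 0 \<le> K t"
    and close: "\<And>x y. x \<in> X \<Longrightarrow> y \<in> X \<Longrightarrow> dist x y < r \<Longrightarrow> dist (f x) (f y) < R"
    and W: "r_disjoint R WW" "\<And>W. W \<in> WW \<Longrightarrow> diam_le D W"
    and V: "\<And>a. a \<le> m \<Longrightarrow> r_disjoint R' (V a)" "D < R'"
    and G: "\<And>a A. a \<le> m \<Longrightarrow> A \<in> V a \<Longrightarrow> r_disjoint (2*r + saturation_bound r K a + 1) (G a A)"
      "\<And>a A Z. a \<le> m \<Longrightarrow> A \<in> V a \<Longrightarrow> Z \<in> G a A \<Longrightarrow>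
         Z \<subseteq> X \<inter> f -` A \<and> diam_le (K (2*r + saturation_bound r K a + 1)) Z"
  shows "disjoint_cover (\<Union>W\<in>WW. (\<Union>a\<le>m. \<Union>A\<in>V a. \<Union>(G a A)) \<inter> f -` W) r (saturation_bound r K (Suc m))"
proof -
  let ?E = "\<Union>a\<le>m. \<Union>A\<in>V a. \<Union>(G a A)"
  have "?E \<subseteq> X"
  proof
    fix x assume "x \<in> ?E"
    then obtain a A Z where "a \<le> m" "A \<in> V a" "Z \<in> G a A" "x \<in> Z"
      by blast
    then show "x \<in> X"
      using G(2) by blast
  qed
  then have "r_disjoint r ((\<lambda>W. ?E \<inter> f -` W) ` WW)"
    by (intro r_disjoint_preimages[OF W(1)] close) auto
  moreover have "disjoint_cover (?E \<inter> f -` W) r (saturation_bound r K (Suc m))" if "W \<in> WW" for W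
  proof -
    have "disjoint_cover ((\<Union>a<Suc m. \<Union>A\<in>V a. \<Union>(G a A)) \<inter> f -` W) r (saturation_bound r K (Suc m))"
    proof (rule disjoint_cover_layers_preimage[OF r K _ W(2)[OF that] V(2)])
      fix a A assume "a < Suc m"
      then have "a \<le> m"
        by simp
      then show "r_disjoint R' (V a)"
        by (rule V(1))
      assume "A \<in> V a"
      then show "r_disjoint (2*r + saturation_bound r K a + 1) (G a A)"
        using G(1) \<open>a \<le> m\<close> by blast
      fix Z assume "Z \<in> G a A"
      then show "f ` Z \<subseteq> A \<and> diam_le (K (2*r + saturation_bound r K a + 1)) Z"
        using G(2) \<open>a \<le> m\<close> \<open>A \<in> V a\<close> by blast
    qed
    then show ?thesis
      by (simp add: lessThan_Suc_atMost)
  qed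
  ultimately show ?thesis
    by (intro disjoint_cover_Union) blast+
qed

lemma ex_common_level:
  assumes "n + m + 1 - m \<le> card {l\<in>{..n+m}. P l}" "n + m + 1 - n \<le> card {l\<in>{..n+m}. Q l}"
  shows "\<exists>l\<le>n+m. P l \<and> Q l"
proof -
  have "card {..n+m} < card {l\<in>{..n+m}. P l} + card {l\<in>{..n+m}. Q l}"
    using assms by simp
  then have "{l\<in>{..n+m}. P l} \<inter> {l\<in>{..n+m}. Q l} \<noteq> {}"
    by (intro card_Int_nonempty[where U = "{..n+m}"]) auto
  then show ?thesis
    by blast
qed

lemma subset_Union_common_levels:
  assumes "f ` X \<subseteq> Y" and W: "kolmogorov_cover Y (n + m) m R D W" and V: "(\<Union>a\<le>m. \<Union>(V a)) = Y"
    and H: "\<And>a A. a \<le> m \<Longrightarrow> A \<in> V a \<Longrightarrow> kolmogorov_cover (X \<inter> f -` A) (n + m) n (\<rho> a) (K a) (H a A)"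
  shows "X \<subseteq> (\<Union>l\<le>n + m. \<Union>W'\<in>W l. (\<Union>a\<le>m. \<Union>A\<in>V a. \<Union>(H a A l)) \<inter> f -` W')"
proof
  fix x assume "x \<in> X"
  then have "f x \<in> Y"
    using assms(1) by blast
  then obtain a A where "a \<le> m" "A \<in> V a" "f x \<in> A"
    using V by blast
  moreover have "x \<in> X \<inter> f -` A"
    using \<open>x \<in> X\<close> \<open>f x \<in> A\<close> by blast
  ultimately have "\<exists>l\<le>n+m. f x \<in> \<Union>(W l) \<and> x \<in> \<Union>(H a A l)"
    using kolmogorov_cover_multiplicity[OF W \<open>f x \<in> Y\<close>] kolmogorov_cover_multiplicity[OF H]
    by (intro ex_common_level) blast+
  then show "x \<in> (\<Union>l\<le>n + m. \<Union>W'\<in>W l. (\<Union>a\<le>m. \<Union>A\<in>V a. \<Union>(H a A l)) \<inter> f -` W')"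
    using \<open>a \<le> m\<close> \<open>A \<in> V a\<close> \<open>x \<in> X\<close> by blast
qed

lemma kolmogorov_cover_if_asdim_le:
  assumes "asdim_le S d" "0 < \<epsilon>"
  obtains D G where "kolmogorov_cover S k d \<epsilon> D G"
proof -
  have "0 < (4*real k+4)*\<epsilon>"
    using assms(2) by simp
  then obtain \<beta> where "asdim_cover S d ((4*real k+4)*\<epsilon>) \<beta>"
    using assms(1) unfolding asdim_le_iff_asdim_cover by blast
  then show thesis
    using kolmogorov_cover_if_asdim_cover assms(2) that by blast
qed

lemma asdim_le_add_of_asdim_fun:
  fixes f :: "'a::metric_space \<Rightarrow> 'b::metric_space"
  assumes fXY: "f ` X \<subseteq> Y" and lsu: "large_scale_uniform X f"
    and f: "asdim_fun X f \<le> enat n" and Y: "asdim_le Y m"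
  shows "asdim_le X (n + m)"
  unfolding asdim_le_iff_asdim_cover
proof (intro allI impI)
  fix r :: real assume r: "0 < r"
  obtain R where R: "0 < R" "\<And>x y. x \<in> X \<Longrightarrow> y \<in> X \<Longrightarrow> dist x y < r \<Longrightarrow> dist (f x) (f y) < R"
    using large_scale_uniform_close[OF lsu less_imp_le[OF r]] by blast
  \<comment> \<open>a fine cover of \<open>Y\<close> in Kolmogorov form and a coarse one, separating the pieces of the fine one\<close>
  obtain D W where W: "kolmogorov_cover Y (n + m) m R D W"
    using kolmogorov_cover_if_asdim_le[OF Y R(1)] by blast
  obtain D' V where V: "(\<Union>a\<le>m. \<Union>(V a)) = Y" "\<forall>a\<le>m. r_disjoint (\<bar>D\<bar> + 1) (V a) \<and> (\<forall>A\<in>V a. diam_le D' A)"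
    using Y unfolding asdim_le_iff_asdim_cover asdim_cover_def by (meson abs_ge_zero add_nonneg_pos zero_less_one)
  obtain K G where K: "\<And>\<rho>. 0 < \<rho> \<Longrightarrow> 0 \<le> K \<rho>"
    and G: "\<And>\<rho> A. 0 < \<rho> \<Longrightarrow> A \<in> (\<Union>a\<le>m. V a) \<Longrightarrow>
      kolmogorov_cover (X \<inter> f -` A) (n + m) n \<rho> (K \<rho>) (G \<rho> A)"
    by (rule uniform_kolmogorov_covers_preimages[OF f, where k = "n + m" and VV = "\<Union>a\<le>m. V a"])
      (use V(2) in blast)+
  \<comment> \<open>the preimages of the colour \<open>a\<close> of the coarse cover are covered at the scale needed for saturation\<close>
  define H where "H a A = G (2*r + saturation_bound r K a + 1) A" for a A
  have H: "kolmogorov_cover (X \<inter> f -` A) (n + m) n (2*r + saturation_bound r K a + 1)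
      (K (2*r + saturation_bound r K a + 1)) (H a A)" if "a \<le> m" "A \<in> V a" for a A
    unfolding H_def using that saturation_bound_nonneg[of r K a] r K
    by (intro G) (auto simp: add_pos_nonneg)
  define T where "T l = (\<Union>W'\<in>W l. (\<Union>a\<le>m. \<Union>A\<in>V a. \<Union>(H a A l)) \<inter> f -` W')" for l
  have "disjoint_cover (T l) r (saturation_bound r K (Suc m))" if l: "l \<le> n + m" for l
    unfolding T_def
  proof (rule disjoint_cover_Union_preimages[OF r K R(2)])
    show "r_disjoint R (W l)" "\<And>W'. W' \<in> W l \<Longrightarrow> diam_le D W'"
      using kolmogorov_coverD[OF W l] by blast+
    show "\<And>a. a \<le> m \<Longrightarrow> r_disjoint (\<bar>D\<bar> + 1) (V a)"
      using V(2) by blast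
    show "D < \<bar>D\<bar> + 1"
      by simp
    fix a A assume a: "a \<le> m" "A \<in> V a"
    show "r_disjoint (2*r + saturation_bound r K a + 1) (H a A l)"
      using kolmogorov_coverD(1)[OF H[OF a] l] .
    fix Z assume "Z \<in> H a A l"
    then show "Z \<subseteq> X \<inter> f -` A \<and> diam_le (K (2*r + saturation_bound r K a + 1)) Z"
      using kolmogorov_coverD(2,3)[OF H[OF a] l] by blast
  qed
  moreover have "(\<Union>l\<le>n + m. T l) = X"
  proof
    show "(\<Union>l\<le>n + m. T l) \<subseteq> X"
      unfolding T_def using kolmogorov_coverD(2)[OF H] by blast
    show "X \<subseteq> (\<Union>l\<le>n + m. T l)"
      unfolding T_def using fXY W V(1) H by (rule subset_Union_common_levels)
  qed
  ultimately show "\<exists>D. asdim_cover X (n + m) r D"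
    using asdim_cover_if_disjoint_covers by blast
qed

theorem mainTheorem1:
  fixes X :: "'a::metric_space set" and Y :: "'b::metric_space set" and f :: "'a \<Rightarrow> 'b"
  assumes "f ` X \<subseteq> Y"
    and "large_scale_uniform X f"
  shows "asdim X \<le> asdim_fun X f + asdim Y"
proof (cases "asdim_fun X f")
  case (enat n)
  show ?thesis
  proof (cases "asdim Y")
    case (enat m)
    then have "asdim_le Y m"
      using asdim_le_enat_iff[of Y m] by simp
    then have "asdim_le X (n + m)"
      using asdim_le_add_of_asdim_fun[OF assms] \<open>asdim_fun X f = enat n\<close> by simp
    then have "asdim X \<le> enat (n + m)"
      using asdim_le_enat_iff by blast
    then show ?thesis
      using \<open>asdim_fun X f = enat n\<close> enat by simp
  qed simp
qed simp

end
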